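(* Let $I$ be a finite index set of users. For each $i \in I$ let $p_i \in [0,1]$, $\Delta p_i \in \mathbb{R}$ with $p_i - \Delta p_i \in [0,1]$, and $a_i \in [0,1]$. Let $\mathrm{CPA} > 0$ and $\beta > 0$, and define $$J = \{ i \in I : \mathrm{CPA}\, p_i a_i > \beta \Delta p_i \}, \qquad K = \{ i \in I : \mathrm{CPA}\, p_i a_i < \beta \Delta p_i \}.$$ Assume it is not the case that $\mathrm{CPA}\, p_i a_i = \beta \Delta p_i$ for all $i \in I$. Suppose that $\sum_{j \in J} p_j a_j = \sum_{k \in K} p_k a_k$ and that this common value is positive. Define $$\mathscr{A}_1 = \frac{\sum_{j\in J} p_j + \sum_{k \in K} (p_k - \Delta p_k)}{\sum_{j \in J} p_j a_j}, \qquad \mathscr{A}_2 = \frac{\sum_{j\in J} (p_j - \Delta p_j) + \sum_{k \in K} p_k}{\sum_{k \in K} p_k a_k}.$$ Then $\mathscr{A}_1 < \mathscr{A}_2$.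
   Context: Interpretation (real-time bidding for online ads): each $i\in I$ indexes an ad request from a distinct user $u_i$; $p_i$ is the action rate if the advertiser's ad is shown, $p_i-\Delta p_i$ the background action rate if it is not shown, $\Delta p_i$ the AR lift, and $a_i$ the probability that an action from $u_i$ is attributed to the DSP that wins $u_i$. $\mathrm{CPA}$ is the advertiser's cost per action. In pure second-price auctions with no other candidates, $DSP_1$ bids the "rational" price $\mathrm{CPA}\, p_i a_i$ and $DSP_2$ bids $\beta \Delta p_i$ (lift-based bidding); $DSP_1$ wins the users in $J$ and $DSP_2$ those in $K$. The expected attributed actions are $\sum_J p_j a_j$ and $\sum_K p_k a_k$ (assumed equal). $\mathscr{A}_1$ (resp. $\mathscr{A}_2$) is the expected total number of actions per attributed action if only $DSP_1$ (resp. $DSP_2$) is considered. The excluded case is $a_i = \frac{\beta}{\mathrm{CPA}}\cdot\frac{\Delta p_i}{p_i}$ for all $i$, i.e. both DSPs always bid the same price. *)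

theory Defs
  imports Complex_Main
begin

end

theory Submission
  imports Defs
begin

text \<open>Summing the bid inequalities over \<open>J\<close> and over \<open>K\<close> and chaining them through the common
  number of attributed actions shows that the total lift won via \<open>K\<close> exceeds that won via \<open>J\<close>.
  The two ratios share their denominator, and their numerators differ by exactly that difference.\<close>

lemma sum_less_sum_of_bid_split:
  fixes w d :: "'i \<Rightarrow> 'a::linordered_field" and c \<beta> :: 'a
  assumes "finite J" "J \<noteq> {}" "\<beta> > 0"
    and J_bids: "\<And>j. j \<in> J \<Longrightarrow> c * w j > \<beta> * d j"
    and K_bids: "\<And>k. k \<in> K \<Longrightarrow> c * w k \<le> \<beta> * d k"
    and same_weight: "(\<Sum>j\<in>J. w j) = (\<Sum>k\<in>K. w k)"
  shows "(\<Sum>j\<in>J. d j) < (\<Sum>k\<in>K. d k)"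
proof -
  have "\<beta> * (\<Sum>j\<in>J. d j) < c * (\<Sum>j\<in>J. w j)"
    using sum_strict_mono[OF assms(1,2) J_bids] by (simp add: sum_distrib_left)
  also have "\<dots> = c * (\<Sum>k\<in>K. w k)"
    using same_weight by simp
  also have "\<dots> \<le> \<beta> * (\<Sum>k\<in>K. d k)"
    using sum_mono[of K, OF K_bids] by (simp add: sum_distrib_left)
  finally show ?thesis
    using \<open>\<beta> > 0\<close> by simp
qed

theorem theorem3:
  fixes I :: "'u set" and p dp a :: "'u \<Rightarrow> real" and CPA \<beta> :: real
    and J K :: "'u set"
  assumes fin: "finite I"
    and p_rng: "\<And>i. i \<in> I \<Longrightarrow> 0 \<le> p i \<and> p i \<le> 1"
    and bg_rng: "\<And>i. i \<in> I \<Longrightarrow> 0 \<le> p i - dp i \<and> p i - dp i \<le> 1"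
    and a_rng: "\<And>i. i \<in> I \<Longrightarrow> 0 \<le> a i \<and> a i \<le> 1"
    and CPA_pos: "CPA > 0" and beta_pos: "\<beta> > 0"
    and J_def: "J = {i \<in> I. CPA * p i * a i > \<beta> * dp i}"
    and K_def: "K = {i \<in> I. CPA * p i * a i < \<beta> * dp i}"
    and not_all_eq: "\<not> (\<forall>i \<in> I. CPA * p i * a i = \<beta> * dp i)"
    and eq: "(\<Sum>j\<in>J. p j * a j) = (\<Sum>k\<in>K. p k * a k)"
    and pos: "(\<Sum>j\<in>J. p j * a j) > 0"
  shows "((\<Sum>j\<in>J. p j) + (\<Sum>k\<in>K. p k - dp k)) / (\<Sum>j\<in>J. p j * a j)
       < ((\<Sum>j\<in>J. p j - dp j) + (\<Sum>k\<in>K. p k)) / (\<Sum>k\<in>K. p k * a k)"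
proof -
  have "(\<Sum>j\<in>J. dp j) < (\<Sum>k\<in>K. dp k)"
  proof (rule sum_less_sum_of_bid_split[where w = "\<lambda>i. p i * a i" and c = CPA and \<beta> = \<beta>])
    show "finite J" using fin by (simp add: J_def)
    show "J \<noteq> {}" using pos by auto
  qed (use beta_pos eq in \<open>auto simp: J_def K_def mult.assoc\<close>)
  then have "(\<Sum>j\<in>J. p j) + (\<Sum>k\<in>K. p k - dp k) < (\<Sum>j\<in>J. p j - dp j) + (\<Sum>k\<in>K. p k)"
    by (simp add: sum_subtractf)
  then show ?thesis
    using pos eq by (simp add: divide_strict_right_mono)
qed

end
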